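(* The functions $S=s^2$, $C=c^2$, $D=d^2$ satisfy $\partial^2(S')^2=4S(1-S)(1-\kappa^2S)$, $\partial^2(C')^2=4C(1-C)(\lambda^2+\kappa^2C)$, and $\partial^2(D')^2=4D(1-D)(D-\lambda^2)$.
   Context: Let $0<\kappa<1$ and $\lambda=\sqrt{1-\kappa^2}$. Let $F(\tfrac16,\tfrac56;\tfrac12;\cdot)$ denote the Gauss hypergeometric function. Define $u$ as a function of $\phi$ near $0$ by $u=\int_0^{\sin\phi}F(\tfrac16,\tfrac56;\tfrac12;\kappa^2t^2)\,\frac{dt}{\sqrt{1-t^2}}$; near the origin (fixing $0$) this inverts to a holomorphic function $u\mapsto\phi(u)$ with $\phi(0)=0$. Let $\psi$ be the holomorphic function near $0$ with $\psi(0)=0$ and $\sin\psi=\kappa\sin\phi$. Set $s=\sin\phi$, $c=\cos\phi$, $d=\cos\psi$, $\partial=\cos\tfrac23\psi$, as functions of $u$ on a small disc about $0$; primes denote $d/du$. *)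

theory Defs
  imports "HOL-Complex_Analysis.Complex_Analysis"
begin

definition gauss_hyp :: "complex \<Rightarrow> complex \<Rightarrow> complex \<Rightarrow> complex \<Rightarrow> complex" where
  "gauss_hyp a b c z =
     (\<Sum>n. (pochhammer a n * pochhammer b n / (pochhammer c n * fact n)) * z ^ n)"

definition F56 :: "complex \<Rightarrow> complex" where
  "F56 = gauss_hyp (1/6) (5/6) (1/2)"

text \<open>u as a function of phi:
  u = integral from 0 to sin phi of F(kappa^2 t^2) / sqrt(1 - t^2) dt
  (straight-line path, principal square root; meaningful for norm (sin phi) < 1).\<close>
definition u_of_phi :: "real \<Rightarrow> complex \<Rightarrow> complex" where
  "u_of_phi \<kappa> \<phi> = contour_integral (linepath 0 (sin \<phi>))
      (\<lambda>t. F56 (complex_of_real (\<kappa>\<^sup>2) * t\<^sup>2) / csqrt (1 - t\<^sup>2))"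

end

theory Submission
  imports Defs
begin

(* F = F(1/6,5/6;1/2;.) solves w(1-w) F'' + (1/2 - 2w) F' = (5/36) F, and under w = sin^2 z this
   equation turns K(z) = F(sin^2 z) cos z into a solution of K'' = -(4/9) K with K(0) = 1,
   K'(0) = 0; hence F(sin^2 psi) cos psi = cos(2 psi/3). Differentiating u(phi(u)) = u gives
   F(kappa^2 sin^2 phi) cos phi phi' = sqrt(1 - sin^2 phi), whose square is cos^2 phi, so
   F(kappa^2 sin^2 phi)^2 phi'^2 = 1. As sin^2 psi = kappa^2 sin^2 phi, this says
   cos(2 psi/3)^2 phi'^2 = cos^2 psi, and the three equations follow by algebra from
   S' = 2 s c phi', C' = -S' and D = 1 - kappa^2 S. *)

definition hypergeometric_fps :: "complex \<Rightarrow> complex \<Rightarrow> complex \<Rightarrow> complex fps" where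
  "hypergeometric_fps a b c =
     Abs_fps (\<lambda>n. pochhammer a n * pochhammer b n / (pochhammer c n * fact n))"

lemma eval_hypergeometric_fps: "eval_fps (hypergeometric_fps a b c) = gauss_hyp a b c"
  by (simp add: fun_eq_iff eval_fps_def hypergeometric_fps_def gauss_hyp_def)

lemma Re_pos_notin_nonpos_Ints: "0 < Re z \<Longrightarrow> z \<notin> \<int>\<^sub>\<le>\<^sub>0"
  by (rule no_nonpos_Int_in_ball_complex) auto

lemma hypergeometric_fps_nth_Suc:
  assumes "c \<notin> \<int>\<^sub>\<le>\<^sub>0"
  shows "fps_nth (hypergeometric_fps a b c) (Suc n) =
           (a + of_nat n) * (b + of_nat n) / ((c + of_nat n) * of_nat (Suc n))
             * fps_nth (hypergeometric_fps a b c) n"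
  using assms by (auto simp: hypergeometric_fps_def pochhammer_Suc field_simps
      dest: pochhammer_eq_0_imp_nonpos_Int plus_of_nat_eq_0_imp simp del: of_nat_Suc)

lemma hypergeometric_fps_nth_eq_0_iff:
  assumes "c \<notin> \<int>\<^sub>\<le>\<^sub>0"
  shows "fps_nth (hypergeometric_fps a b c) n = 0 \<longleftrightarrow> pochhammer a n = 0 \<or> pochhammer b n = 0"
  using assms by (auto simp: hypergeometric_fps_def dest: pochhammer_eq_0_imp_nonpos_Int)

lemma LIMSEQ_add_of_nat_div_add_of_nat:
  fixes a b :: complex
  assumes "b \<notin> \<int>\<^sub>\<le>\<^sub>0"
  shows "(\<lambda>n. (a + of_nat n) / (b + of_nat n)) \<longlonglongrightarrow> 1"
proof -
  have "(\<lambda>n. 1 + (a - b) / (b + of_nat n)) \<longlonglongrightarrow> 1 + 0"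
    by (intro tendsto_intros tendsto_divide_0[OF tendsto_const]
          tendsto_add_filterlim_at_infinity[OF tendsto_const tendsto_of_nat])
  moreover have "1 + (a - b) / (b + of_nat n) = (a + of_nat n) / (b + of_nat n)" for n
  proof -
    have "b + of_nat n \<noteq> 0"
      using assms by (auto dest: plus_of_nat_eq_0_imp)
    then show ?thesis by (simp add: field_simps)
  qed
  ultimately show ?thesis by simp
qed

lemma fps_conv_radius_hypergeometric_fps:
  assumes "a \<notin> \<int>\<^sub>\<le>\<^sub>0" "b \<notin> \<int>\<^sub>\<le>\<^sub>0" "c \<notin> \<int>\<^sub>\<le>\<^sub>0"
  shows "fps_conv_radius (hypergeometric_fps a b c) = 1"
  unfolding fps_conv_radius_def
proof (rule conv_radius_ratio_limit_nonzero[of _ 1])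
  let ?h = "fps_nth (hypergeometric_fps a b c)"
  have "(\<lambda>n. (c + of_nat n) / (a + of_nat n) * ((1 + of_nat n) / (b + of_nat n))) \<longlonglongrightarrow> 1 * 1"
    using assms by (intro tendsto_mult LIMSEQ_add_of_nat_div_add_of_nat)
  then have "(\<lambda>n. norm ((c + of_nat n) / (a + of_nat n) * ((1 + of_nat n) / (b + of_nat n)))) \<longlonglongrightarrow> 1"
    using tendsto_norm by fastforce
  moreover have "norm (?h n) / norm (?h (Suc n))
      = norm ((c + of_nat n) / (a + of_nat n) * ((1 + of_nat n) / (b + of_nat n)))" for n
  proof -
    have "?h n \<noteq> 0"
      using assms by (auto simp: hypergeometric_fps_nth_eq_0_iff dest: pochhammer_eq_0_imp_nonpos_Int)
    moreover have "a + of_nat n \<noteq> 0" "b + of_nat n \<noteq> 0" "c + of_nat n \<noteq> 0"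
      using assms by (auto dest: plus_of_nat_eq_0_imp)
    ultimately have "?h n / ?h (Suc n) = (c + of_nat n) / (a + of_nat n) * ((1 + of_nat n) / (b + of_nat n))"
      using assms(3) by (simp add: hypergeometric_fps_nth_Suc)
    then show ?thesis by (simp flip: norm_divide)
  qed
  ultimately show "(\<lambda>n. norm (?h n) / norm (?h (Suc n))) \<longlonglongrightarrow> 1" by simp
qed auto

lemma hypergeometric_fps_ode:
  fixes a b c :: complex
  assumes "c \<notin> \<int>\<^sub>\<le>\<^sub>0"
  defines "H \<equiv> hypergeometric_fps a b c"
  shows "fps_X * (1 - fps_X) * fps_deriv (fps_deriv H)
           + (fps_const c - fps_const (a + b + 1) * fps_X) * fps_deriv H = fps_const (a * b) * H"
proof (rule fps_ext)
  fix n
  have rec: "(c + of_nat k) * of_nat (Suc k) * fps_nth H (Suc k)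
      = (a + of_nat k) * (b + of_nat k) * fps_nth H k" for k
    using assms(1)
    by (auto simp: H_def hypergeometric_fps_nth_Suc dest: plus_of_nat_eq_0_imp simp del: of_nat_Suc)
  consider "n = 0" | "n = 1" | m where "n = Suc (Suc m)"
    by (metis One_nat_def not0_implies_Suc)
  then show "fps_nth (fps_X * (1 - fps_X) * fps_deriv (fps_deriv H)
      + (fps_const c - fps_const (a + b + 1) * fps_X) * fps_deriv H) n
      = fps_nth (fps_const (a * b) * H) n"
  proof cases
    case 1
    then show ?thesis using rec[of 0] by (simp add: algebra_simps)
  next
    case 2
    then show ?thesis using rec[of 1] by (simp add: algebra_simps numeral_2_eq_2)
  next
    case 3
    then show ?thesis using rec[of n] by (simp add: algebra_simps)
  qed
qed

lemma gauss_hyp_holomorphic: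
  assumes "a \<notin> \<int>\<^sub>\<le>\<^sub>0" "b \<notin> \<int>\<^sub>\<le>\<^sub>0" "c \<notin> \<int>\<^sub>\<le>\<^sub>0"
  shows "gauss_hyp a b c holomorphic_on ball 0 1"
  using holomorphic_on_eval_fps[of "ball 0 1" "hypergeometric_fps a b c"]
  by (simp add: assms fps_conv_radius_hypergeometric_fps eval_hypergeometric_fps one_ereal_def)

lemma gauss_hyp_ode:
  assumes "a \<notin> \<int>\<^sub>\<le>\<^sub>0" "b \<notin> \<int>\<^sub>\<le>\<^sub>0" "c \<notin> \<int>\<^sub>\<le>\<^sub>0" "norm z < 1"
  shows "z * (1 - z) * deriv (deriv (gauss_hyp a b c)) z
           + (c - (a + b + 1) * z) * deriv (gauss_hyp a b c) z = a * b * gauss_hyp a b c z"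
proof -
  let ?H = "hypergeometric_fps a b c"
  have radius: "fps_conv_radius ?H = 1"
    using assms(1-3) by (rule fps_conv_radius_hypergeometric_fps)
  have radius_H: "norm z < fps_conv_radius ?H"
    using assms(4) by (simp add: radius one_ereal_def)
  then have radius_H': "norm z < fps_conv_radius (fps_deriv ?H)"
    using fps_conv_radius_deriv less_le_trans by blast
  then have radius_H'': "norm z < fps_conv_radius (fps_deriv (fps_deriv ?H))"
    using fps_conv_radius_deriv less_le_trans by blast
  have "eventually (\<lambda>w. w \<in> ball 0 1) (nhds z)"
    using assms(4) by (intro eventually_nhds_in_open) auto
  then have "eventually (\<lambda>w. eval_fps (fps_deriv ?H) w = deriv (gauss_hyp a b c) w) (nhds z)"
    by eventually_elim
      (simp add: eval_fps_deriv radius one_ereal_def flip: eval_hypergeometric_fps)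
  then have second: "eval_fps (fps_deriv (fps_deriv ?H)) z = deriv (deriv (gauss_hyp a b c)) z"
    using radius_H' by (simp add: eval_fps_deriv deriv_cong_ev)
  have first: "eval_fps (fps_deriv ?H) z = deriv (gauss_hyp a b c) z"
    using radius_H by (simp add: eval_fps_deriv flip: eval_hypergeometric_fps)
  have "eval_fps (fps_X * (1 - fps_X) * fps_deriv (fps_deriv ?H)
           + (fps_const c - fps_const (a + b + 1) * fps_X) * fps_deriv ?H) z
        = eval_fps (fps_const (a * b) * ?H) z"
    using hypergeometric_fps_ode[OF assms(3)] by simp
  moreover have "norm z < fps_conv_radius (f * g)" "norm z < fps_conv_radius (f + g)"
    "norm z < fps_conv_radius (f - g)"
    if "norm z < fps_conv_radius f" "norm z < fps_conv_radius g" for f g :: "complex fps"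
    using that fps_conv_radius_mult[of f g] fps_conv_radius_add[of f g] fps_conv_radius_diff[of f g]
    by (meson less_le_trans min_less_iff_conj)+
  ultimately show ?thesis
    using radius_H radius_H' radius_H''
    by (simp add: eval_fps_add eval_fps_mult eval_fps_diff first second eval_hypergeometric_fps)
qed

lemma harmonic_oscillator_cos_along:
  fixes K K' g :: "complex \<Rightarrow> complex" and w :: complex
  assumes "convex S" "x0 \<in> S" "g x0 = 0" "g holomorphic_on S" "w \<noteq> 0"
    and "K 0 = 1" "K' 0 = 0"
    and K: "\<And>x. x \<in> S \<Longrightarrow> (K has_field_derivative K' (g x)) (at (g x))"
    and K': "\<And>x. x \<in> S \<Longrightarrow> (K' has_field_derivative - w\<^sup>2 * K (g x)) (at (g x))"
    and "x \<in> S"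
  shows "K (g x) = cos (w * g x)"
proof -
  define W1 where "W1 z = K' z * cos (w * z) + w * K z * sin (w * z)" for z
  define W2 where "W2 z = K' z * sin (w * z) - w * K z * cos (w * z)" for z
  have "((\<lambda>x. W1 (g x)) has_field_derivative 0) (at x within S)"
    "((\<lambda>x. W2 (g x)) has_field_derivative 0) (at x within S)" if "x \<in> S" for x
  proof -
    obtain g' where g': "(g has_field_derivative g') (at x within S)"
      using assms(4) \<open>x \<in> S\<close> by (auto simp: holomorphic_on_def field_differentiable_def)
    have "(W1 has_field_derivative 0) (at (g x))" "(W2 has_field_derivative 0) (at (g x))"
      unfolding W1_def[abs_def] W2_def[abs_def]
      by (rule derivative_eq_intros K K' that refl | simp add: power2_eq_square algebra_simps)+
    then show "((\<lambda>x. W1 (g x)) has_field_derivative 0) (at x within S)"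
      "((\<lambda>x. W2 (g x)) has_field_derivative 0) (at x within S)"
      using DERIV_chain2[OF _ g', of W1 0] DERIV_chain2[OF _ g', of W2 0] by simp_all
  qed
  then obtain c1 c2 where "\<forall>x\<in>S. W1 (g x) = c1" "\<forall>x\<in>S. W2 (g x) = c2"
    using has_field_derivative_zero_constant[OF assms(1)] by metis
  then have "W1 (g x) = W1 (g x0)" "W2 (g x) = W2 (g x0)"
    using assms(2,10) by auto
  then have "W1 (g x) = 0" "W2 (g x) = - w"
    using assms(3,6,7) by (simp_all add: W1_def W2_def)
  moreover have "sin (w * g x) * W1 (g x) - cos (w * g x) * W2 (g x)
      = w * K (g x) * ((sin (w * g x))\<^sup>2 + (cos (w * g x))\<^sup>2)"
    unfolding W1_def W2_def by algebra
  ultimately show ?thesis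
    using assms(5) by (simp add: mult.commute)
qed

lemma gauss_hyp_at_0: "gauss_hyp a b c 0 = 1"
  by (simp add: eval_fps_at_0 hypergeometric_fps_def flip: eval_hypergeometric_fps)

lemma norm_square_less_one: "norm (t :: 'a :: real_normed_div_algebra) < 1 \<Longrightarrow> norm (t\<^sup>2) < 1"
  by (simp add: norm_power abs_square_less_1)

(* The identity fails on the other components of {z. norm (sin z) < 1} (at z = pi the left side
   is -1), so it is transported along a map g from a convex set instead of stated on a domain. *)
lemma gauss_hyp_sin_squared_times_cos:
  fixes a :: complex and g :: "complex \<Rightarrow> complex"
  assumes "a \<notin> \<int>\<^sub>\<le>\<^sub>0" "1 - a \<notin> \<int>\<^sub>\<le>\<^sub>0" "a \<noteq> 1/2"
    and "convex S" "x0 \<in> S" "g x0 = 0" "g holomorphic_on S"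
    and "\<forall>x\<in>S. norm (sin (g x)) < 1" "x \<in> S"
  shows "gauss_hyp a (1 - a) (1/2) ((sin (g x))\<^sup>2) * cos (g x) = cos ((1 - 2 * a) * g x)"
proof -
  define F where "F = gauss_hyp a (1 - a) (1/2)"
  define K where "K z = F ((sin z)\<^sup>2) * cos z" for z
  define K' where
    "K' z = 2 * sin z * (cos z)\<^sup>2 * deriv F ((sin z)\<^sup>2) - sin z * F ((sin z)\<^sup>2)" for z
  have half: "1/2 \<notin> (\<int>\<^sub>\<le>\<^sub>0 :: complex set)"
    by (simp add: Re_pos_notin_nonpos_Ints)
  have hol: "F holomorphic_on ball 0 1"
    unfolding F_def using assms(1,2) half by (rule gauss_hyp_holomorphic)
  have "(K has_field_derivative K' z) (at z)"
    "(K' has_field_derivative - (1 - 2 * a)\<^sup>2 * K z) (at z)" if "norm (sin z) < 1" for z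
  proof -
    have w: "(sin z)\<^sup>2 \<in> ball 0 1"
      using norm_square_less_one[OF that] by simp
    note F = holomorphic_derivI[OF hol open_ball w]
    note F' = holomorphic_derivI[OF holomorphic_deriv[OF hol open_ball] open_ball w]
    have ode: "(sin z)\<^sup>2 * (1 - (sin z)\<^sup>2) * deriv (deriv F) ((sin z)\<^sup>2)
        + (1/2 - 2 * (sin z)\<^sup>2) * deriv F ((sin z)\<^sup>2) = a * (1 - a) * F ((sin z)\<^sup>2)"
      using gauss_hyp_ode[OF assms(1,2) half, of "(sin z)\<^sup>2"] w by (simp add: F_def)
    have Fs: "((\<lambda>z. F ((sin z)\<^sup>2)) has_field_derivative
        deriv F ((sin z)\<^sup>2) * (2 * sin z * cos z)) (at z)"
      by (rule DERIV_chain2[where g="\<lambda>z. (sin z)\<^sup>2", OF F]) (auto intro!: derivative_eq_intros)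
    have F's: "((\<lambda>z. deriv F ((sin z)\<^sup>2)) has_field_derivative
        deriv (deriv F) ((sin z)\<^sup>2) * (2 * sin z * cos z)) (at z)"
      by (rule DERIV_chain2[where g="\<lambda>z. (sin z)\<^sup>2", OF F']) (auto intro!: derivative_eq_intros)
    show "(K has_field_derivative K' z) (at z)"
      unfolding K_def[abs_def] K'_def
      by (rule Fs derivative_eq_intros refl)+ (simp add: power2_eq_square algebra_simps)
    have "(K' has_field_derivative
        cos z * (4 * (sin z)\<^sup>2 * (cos z)\<^sup>2 * deriv (deriv F) ((sin z)\<^sup>2)
        + (2 * (cos z)\<^sup>2 - 6 * (sin z)\<^sup>2) * deriv F ((sin z)\<^sup>2) - F ((sin z)\<^sup>2))) (at z)"
      unfolding K'_def[abs_def]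
      by (rule Fs F's derivative_eq_intros refl)+ (simp add: power2_eq_square algebra_simps)
    also have "cos z * (4 * (sin z)\<^sup>2 * (cos z)\<^sup>2 * deriv (deriv F) ((sin z)\<^sup>2)
        + (2 * (cos z)\<^sup>2 - 6 * (sin z)\<^sup>2) * deriv F ((sin z)\<^sup>2) - F ((sin z)\<^sup>2))
      = cos z * (4 * ((sin z)\<^sup>2 * (1 - (sin z)\<^sup>2) * deriv (deriv F) ((sin z)\<^sup>2)
          + (1/2 - 2 * (sin z)\<^sup>2) * deriv F ((sin z)\<^sup>2)) - F ((sin z)\<^sup>2))"
      by (simp add: cos_squared_eq algebra_simps)
    also have "\<dots> = - (1 - 2 * a)\<^sup>2 * K z"
      unfolding ode by (simp add: K_def power2_eq_square algebra_simps)
    finally show "(K' has_field_derivative - (1 - 2 * a)\<^sup>2 * K z) (at z)" .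
  qed
  moreover have "K 0 = 1" "K' 0 = 0"
    by (simp_all add: K_def K'_def F_def gauss_hyp_at_0)
  moreover have "1 - 2 * a \<noteq> 0"
    using assms(3) by (auto simp: field_simps)
  ultimately have "K (g x) = cos ((1 - 2 * a) * g x)"
    using assms(4-9) by (intro harmonic_oscillator_cos_along[of S x0 g _ K K']) auto
  then show ?thesis by (simp add: K_def F_def)
qed

lemma contour_integral_linepath_has_field_derivative:
  assumes "f holomorphic_on S" "open S" "convex S" "a \<in> S" "x \<in> S"
  shows "((\<lambda>x. contour_integral (linepath a x) f) has_field_derivative f x) (at x)"
proof (rule triangle_contour_integrals_starlike_primitive[of S f a])
  show "continuous_on S f"
    using assms(1) by (rule holomorphic_on_imp_continuous_on)
  show "closed_segment a y \<subseteq> S" if "y \<in> S" for y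
    using assms(3,4) that by (simp add: closed_segment_subset)
  show "contour_integral (linepath a b) f + contour_integral (linepath b c) f
          + contour_integral (linepath c a) f = 0" if "closed_segment b c \<subseteq> S" for b c
  proof -
    have "convex hull {a, b, c} \<subseteq> S"
      using assms(3,4) that by (intro hull_minimal) auto
    then have "f holomorphic_on convex hull {a, b, c}"
      using assms(1) holomorphic_on_subset by blast
    then show ?thesis
      by (rule has_chain_integral_chain_integral3[OF Cauchy_theorem_triangle])
  qed
qed (use assms in auto)

lemma Re_one_minus_square_pos: "norm t < 1 \<Longrightarrow> 0 < Re (1 - t\<^sup>2)"
  using complex_Re_le_cmod[of "t\<^sup>2"] norm_square_less_one[of t] by simp

lemma F56_holomorphic: "F56 holomorphic_on ball 0 1"
  unfolding F56_def by (rule gauss_hyp_holomorphic) (simp_all add: Re_pos_notin_nonpos_Ints)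

lemma u_integrand_holomorphic:
  assumes "\<bar>\<kappa>\<bar> \<le> 1"
  shows "(\<lambda>t. F56 (complex_of_real (\<kappa>\<^sup>2) * t\<^sup>2) / csqrt (1 - t\<^sup>2)) holomorphic_on ball 0 1"
proof -
  have image: "(\<lambda>t. complex_of_real (\<kappa>\<^sup>2) * t\<^sup>2) ` ball 0 1 \<subseteq> ball 0 1"
  proof (rule image_subsetI)
    fix t :: complex assume "t \<in> ball 0 1"
    then have t: "norm t < 1" by simp
    have "norm (complex_of_real (\<kappa>\<^sup>2)) \<le> 1"
      using assms by (simp only: norm_of_real abs_power2 abs_square_le_1)
    then have "norm (complex_of_real (\<kappa>\<^sup>2) * t\<^sup>2) \<le> norm (t\<^sup>2)"
      by (simp add: norm_mult mult_left_le_one_le del: of_real_power norm_of_real)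
    also have "\<dots> < 1"
      using t by (rule norm_square_less_one)
    finally show "complex_of_real (\<kappa>\<^sup>2) * t\<^sup>2 \<in> ball 0 1" by simp
  qed
  have "(\<lambda>t. complex_of_real (\<kappa>\<^sup>2) * t\<^sup>2) holomorphic_on ball 0 1"
    by (intro holomorphic_intros)
  then have "(\<lambda>t. F56 (complex_of_real (\<kappa>\<^sup>2) * t\<^sup>2)) holomorphic_on ball 0 1"
    using holomorphic_on_compose_gen[OF _ F56_holomorphic image] by (simp add: o_def)
  moreover have "1 - t\<^sup>2 \<notin> \<real>\<^sub>\<le>\<^sub>0" "csqrt (1 - t\<^sup>2) \<noteq> 0" if "t \<in> ball 0 1" for t
    using Re_one_minus_square_pos[of t] that by (auto simp: complex_nonpos_Reals_iff)
  ultimately show ?thesis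
    by (intro holomorphic_intros) auto
qed

lemma u_of_phi_inverse_deriv:
  assumes "\<bar>\<kappa>\<bar> \<le> 1" "open S" "\<phi> holomorphic_on S"
    and "\<forall>u\<in>S. norm (sin (\<phi> u)) < 1" "\<forall>u\<in>S. u_of_phi \<kappa> (\<phi> u) = u" "u \<in> S"
  shows "F56 (complex_of_real (\<kappa>\<^sup>2) * (sin (\<phi> u))\<^sup>2) * cos (\<phi> u) * deriv \<phi> u
           = csqrt (1 - (sin (\<phi> u))\<^sup>2)"
proof -
  define f where "f t = F56 (complex_of_real (\<kappa>\<^sup>2) * t\<^sup>2) / csqrt (1 - t\<^sup>2)" for t
  have sin_phi: "sin (\<phi> u) \<in> ball 0 1"
    using assms(4,6) by simp
  have "((\<lambda>w. contour_integral (linepath 0 w) f) has_field_derivative f (sin (\<phi> u)))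
      (at (sin (\<phi> u)))"
    using u_integrand_holomorphic[OF assms(1)] sin_phi unfolding f_def[abs_def]
    by (intro contour_integral_linepath_has_field_derivative) auto
  then have "((\<lambda>v. u_of_phi \<kappa> (\<phi> v)) has_field_derivative
      f (sin (\<phi> u)) * (cos (\<phi> u) * deriv \<phi> u)) (at u)"
    unfolding u_of_phi_def f_def[symmetric, abs_def]
    by (rule DERIV_chain2[OF _ DERIV_chain2[OF DERIV_sin holomorphic_derivI[OF assms(3,2,6)]]])
  then have "((\<lambda>v. v) has_field_derivative f (sin (\<phi> u)) * (cos (\<phi> u) * deriv \<phi> u)) (at u)"
    by (rule has_field_derivative_transform_within_open[OF _ assms(2,6)]) (use assms(5) in simp)
  then have "f (sin (\<phi> u)) * (cos (\<phi> u) * deriv \<phi> u) = 1"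
    using DERIV_ident DERIV_unique by blast
  moreover have "csqrt (1 - (sin (\<phi> u))\<^sup>2) \<noteq> 0"
    using Re_one_minus_square_pos[of "sin (\<phi> u)"] sin_phi by auto
  ultimately show ?thesis
    by (simp add: f_def field_simps)
qed

lemma cos_two_thirds_psi_deriv_phi_squared:
  assumes "\<bar>\<kappa>\<bar> \<le> 1" "open S" "convex S" "0 \<in> S"
    and "\<phi> holomorphic_on S" "\<forall>u\<in>S. norm (sin (\<phi> u)) < 1" "\<forall>u\<in>S. u_of_phi \<kappa> (\<phi> u) = u"
    and "\<psi> holomorphic_on S" "\<psi> 0 = 0" "\<forall>u\<in>S. sin (\<psi> u) = complex_of_real \<kappa> * sin (\<phi> u)"
    and "u \<in> S"
  shows "(cos (2/3 * \<psi> u))\<^sup>2 * (deriv \<phi> u)\<^sup>2 = (cos (\<psi> u))\<^sup>2"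
proof -
  define s c p where "s = sin (\<phi> u)" and "c = cos (\<phi> u)" and "p = deriv \<phi> u"
  define Fv where "Fv = F56 (complex_of_real (\<kappa>\<^sup>2) * s\<^sup>2)"
  have sin_psi: "norm (sin (\<psi> v)) < 1" if "v \<in> S" for v
  proof -
    have "norm (sin (\<psi> v)) = \<bar>\<kappa>\<bar> * norm (sin (\<phi> v))"
      using assms(10) that by (simp add: norm_mult)
    also have "\<dots> < 1"
      using assms(1,6) that mult_left_le_one_le[of "norm (sin (\<phi> v))" "\<bar>\<kappa>\<bar>"] by force
    finally show ?thesis .
  qed
  have "cos (2/3 * \<psi> u) = F56 ((sin (\<psi> u))\<^sup>2) * cos (\<psi> u)"
    using gauss_hyp_sin_squared_times_cos[of "1/6" S 0 \<psi> u] assms(3,4,8,9,11) sin_psi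
    by (simp add: F56_def Re_pos_notin_nonpos_Ints)
  also have "(sin (\<psi> u))\<^sup>2 = complex_of_real (\<kappa>\<^sup>2) * s\<^sup>2"
    using assms(10,11) by (simp add: s_def power_mult_distrib)
  finally have dn: "cos (2/3 * \<psi> u) = Fv * cos (\<psi> u)"
    by (simp add: Fv_def)
  have "Fv * c * p = csqrt (1 - s\<^sup>2)"
    unfolding Fv_def s_def c_def p_def using assms(1,2,5-7,11) by (rule u_of_phi_inverse_deriv)
  then have "c\<^sup>2 * (Fv\<^sup>2 * p\<^sup>2) = c\<^sup>2 * 1"
    by (metis power2_csqrt power_mult_distrib mult.commute mult.left_commute mult_1_right
        cos_squared_eq s_def c_def)
  moreover have "c\<^sup>2 \<noteq> 0"
    using Re_one_minus_square_pos[of s] assms(6,11) by (auto simp: s_def c_def cos_squared_eq)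
  ultimately have "Fv\<^sup>2 * p\<^sup>2 = 1"
    using mult_left_cancel by blast
  then show ?thesis
    unfolding dn p_def by (simp add: algebra_simps)
qed

lemma squared_derivative_equations:
  fixes \<kappa> :: real and \<phi> \<psi> :: "complex \<Rightarrow> complex"
  defines "k \<equiv> complex_of_real (\<kappa>\<^sup>2)"
  assumes "\<bar>\<kappa>\<bar> \<le> 1" "open S" "convex S" "0 \<in> S"
    and "\<phi> holomorphic_on S" "\<forall>u\<in>S. norm (sin (\<phi> u)) < 1" "\<forall>u\<in>S. u_of_phi \<kappa> (\<phi> u) = u"
    and "\<psi> holomorphic_on S" "\<psi> 0 = 0" "\<forall>u\<in>S. sin (\<psi> u) = complex_of_real \<kappa> * sin (\<phi> u)"
    and "u \<in> S"
  shows "(cos (2/3 * \<psi> u))\<^sup>2 * (deriv (\<lambda>v. (sin (\<phi> v))\<^sup>2) u)\<^sup>2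
           = 4 * (sin (\<phi> u))\<^sup>2 * (1 - (sin (\<phi> u))\<^sup>2) * (1 - k * (sin (\<phi> u))\<^sup>2)"
    and "(cos (2/3 * \<psi> u))\<^sup>2 * (deriv (\<lambda>v. (cos (\<phi> v))\<^sup>2) u)\<^sup>2
           = 4 * (cos (\<phi> u))\<^sup>2 * (1 - (cos (\<phi> u))\<^sup>2) * ((1 - k) + k * (cos (\<phi> u))\<^sup>2)"
    and "(cos (2/3 * \<psi> u))\<^sup>2 * (deriv (\<lambda>v. (cos (\<psi> v))\<^sup>2) u)\<^sup>2
           = 4 * (cos (\<psi> u))\<^sup>2 * (1 - (cos (\<psi> u))\<^sup>2) * ((cos (\<psi> u))\<^sup>2 - (1 - k))"
proof -
  define s c d p
    where "s = sin (\<phi> u)" and "c = cos (\<phi> u)" and "d = cos (\<psi> u)" and "p = deriv \<phi> u"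
  have dn: "(cos (2/3 * \<psi> u))\<^sup>2 * p\<^sup>2 = d\<^sup>2"
    unfolding p_def d_def using assms(2-) by (rule cos_two_thirds_psi_deriv_phi_squared)
  have phi': "(\<phi> has_field_derivative p) (at u)"
    unfolding p_def using assms(3,6,12) by (intro holomorphic_derivI)
  have dS: "((\<lambda>v. (sin (\<phi> v))\<^sup>2) has_field_derivative 2 * s * c * p) (at u)"
    unfolding s_def c_def by (rule derivative_eq_intros phi' refl | simp)+
  have dC: "((\<lambda>v. (cos (\<phi> v))\<^sup>2) has_field_derivative - 2 * s * c * p) (at u)"
    unfolding s_def c_def by (rule derivative_eq_intros phi' refl | simp)+
  have "eventually (\<lambda>v. (cos (\<psi> v))\<^sup>2 = 1 - k * (sin (\<phi> v))\<^sup>2) (nhds u)"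
    using eventually_nhds_in_open[OF assms(3,12)]
    by eventually_elim (use assms(11) in \<open>simp add: k_def cos_squared_eq power_mult_distrib\<close>)
  then have "deriv (\<lambda>v. (cos (\<psi> v))\<^sup>2) u
      = deriv (\<lambda>v. 1 - k * (sin (\<phi> v))\<^sup>2) u"
    by (rule deriv_cong_ev) simp
  also have "\<dots> = 0 - k * (2 * s * c * p)"
    by (rule DERIV_imp_deriv DERIV_diff DERIV_const DERIV_cmult dS)+
  finally have D': "deriv (\<lambda>v. (cos (\<psi> v))\<^sup>2) u = - k * (2 * s * c * p)"
    by simp
  have c2: "c\<^sup>2 = 1 - s\<^sup>2" and d2: "d\<^sup>2 = 1 - k * s\<^sup>2"
    using assms(11,12) by (simp_all add: s_def c_def d_def k_def cos_squared_eq power_mult_distrib)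
  show "(cos (2/3 * \<psi> u))\<^sup>2 * (deriv (\<lambda>v. (sin (\<phi> v))\<^sup>2) u)\<^sup>2
           = 4 * (sin (\<phi> u))\<^sup>2 * (1 - (sin (\<phi> u))\<^sup>2) * (1 - k * (sin (\<phi> u))\<^sup>2)"
    using dn c2 d2 unfolding DERIV_imp_deriv[OF dS] s_def[symmetric] by algebra
  show "(cos (2/3 * \<psi> u))\<^sup>2 * (deriv (\<lambda>v. (cos (\<phi> v))\<^sup>2) u)\<^sup>2
           = 4 * (cos (\<phi> u))\<^sup>2 * (1 - (cos (\<phi> u))\<^sup>2) * ((1 - k) + k * (cos (\<phi> u))\<^sup>2)"
    using dn c2 d2 unfolding DERIV_imp_deriv[OF dC] c_def[symmetric] by algebra
  show "(cos (2/3 * \<psi> u))\<^sup>2 * (deriv (\<lambda>v. (cos (\<psi> v))\<^sup>2) u)\<^sup>2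
           = 4 * (cos (\<psi> u))\<^sup>2 * (1 - (cos (\<psi> u))\<^sup>2) * ((cos (\<psi> u))\<^sup>2 - (1 - k))"
    using dn c2 d2 unfolding D' d_def[symmetric] by algebra
qed

theorem theorem5:
  fixes \<kappa> lam r :: real and \<phi> \<psi> :: "complex \<Rightarrow> complex"
  assumes "0 < \<kappa>" and "\<kappa> < 1" and "lam = sqrt (1 - \<kappa>\<^sup>2)"
    and "0 < r"
    and "\<phi> holomorphic_on ball 0 r" and "\<phi> 0 = 0"
    and "\<forall>u\<in>ball 0 r. norm (sin (\<phi> u)) < 1"
    and "\<forall>u\<in>ball 0 r. u_of_phi \<kappa> (\<phi> u) = u"
    and "\<psi> holomorphic_on ball 0 r" and "\<psi> 0 = 0"
    and "\<forall>u\<in>ball 0 r. sin (\<psi> u) = complex_of_real \<kappa> * sin (\<phi> u)"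
  shows "\<forall>u\<in>ball 0 r.
    let S = (\<lambda>v. (sin (\<phi> v))\<^sup>2); C = (\<lambda>v. (cos (\<phi> v))\<^sup>2);
        D = (\<lambda>v. (cos (\<psi> v))\<^sup>2); dd = cos (2/3 * \<psi> u);
        k2 = complex_of_real (\<kappa>\<^sup>2); l2 = complex_of_real (lam\<^sup>2)
    in dd\<^sup>2 * (deriv S u)\<^sup>2 = 4 * S u * (1 - S u) * (1 - k2 * S u)
     \<and> dd\<^sup>2 * (deriv C u)\<^sup>2 = 4 * C u * (1 - C u) * (l2 + k2 * C u)
     \<and> dd\<^sup>2 * (deriv D u)\<^sup>2 = 4 * D u * (1 - D u) * (D u - l2)"
proof -
  have "\<bar>\<kappa>\<bar> \<le> 1" "complex_of_real (lam\<^sup>2) = 1 - complex_of_real (\<kappa>\<^sup>2)"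
    using assms(1-3) by (simp_all add: abs_square_le_1)
  then show ?thesis
    using squared_derivative_equations[of \<kappa> "ball 0 r" \<phi> \<psi>] assms(4-11)
    by (simp add: Let_def)
qed

end
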